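(* Let $T$ be a tree on $n\ge 2$ vertices, $k\ge 3$ odd, and $M$ the order-$k$ Steiner distance hypermatrix of $T$. Then $M(\mathbf{c},\ldots,\mathbf{c})=0$ for every $\mathbf{c}\in\mathcal{H}_n$.
   Context: $T$ is a tree with vertex set $\{1,\dots,n\}$. For $U\subseteq V(T)$, the Steiner distance $S(U)$ is the minimum number of edges of a connected subgraph of $T$ whose vertex set contains $U$. The order-$k$ Steiner distance hypermatrix $M$ has entries $M_{(i_1,\dots,i_k)}=S(\{i_1,\dots,i_k\})$, and $M(\mathbf{x}_1,\dots,\mathbf{x}_k)=\sum_{\mathbf{i}\in V(T)^k}M_{\mathbf{i}}\prod_{j=1}^k x_{j i_j}$. $\mathcal{H}_n=\{\mathbf{c}\in\mathbb{R}^n:\sum_i c_i=0\}$. *)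

theory Defs
  imports Complex_Main "HOL-Library.FuncSet"
begin

definition adj :: "nat set set \<Rightarrow> nat \<Rightarrow> nat \<Rightarrow> bool" where
  "adj F x y \<longleftrightarrow> {x, y} \<in> F"

definition is_graph :: "nat set \<Rightarrow> nat set set \<Rightarrow> bool" where
  "is_graph V E \<longleftrightarrow> (\<forall>e\<in>E. \<exists>x y. x \<noteq> y \<and> x \<in> V \<and> y \<in> V \<and> e = {x, y})"

definition connected_graph :: "nat set \<Rightarrow> nat set set \<Rightarrow> bool" where
  "connected_graph V E \<longleftrightarrow> V \<noteq> {} \<and> (\<forall>x\<in>V. \<forall>y\<in>V. (adj E)\<^sup>*\<^sup>* x y)"

definition is_tree :: "nat set \<Rightarrow> nat set set \<Rightarrow> bool" where
  "is_tree V E \<longleftrightarrow> finite V \<and> is_graph V E \<and> connected_graph V E \<and>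
     (\<forall>e\<in>E. \<not> connected_graph V (E - {e}))"

definition steiner_dist :: "nat set \<Rightarrow> nat set set \<Rightarrow> nat set \<Rightarrow> nat" where
  "steiner_dist V E U = (LEAST m. \<exists>W F. W \<subseteq> V \<and> F \<subseteq> E \<and> is_graph W F \<and>
      connected_graph W F \<and> U \<subseteq> W \<and> card F = m)"

text \<open>The multilinear form M(c,...,c) of the order-k Steiner distance hypermatrix,
  with index tuples (i_0,...,i_{k-1}) in {1..n}^k represented as extensional functions.\<close>
definition steiner_form :: "nat \<Rightarrow> nat set set \<Rightarrow> nat \<Rightarrow> (nat \<Rightarrow> real) \<Rightarrow> real" where
  "steiner_form n E k c = (\<Sum>i\<in>Pi\<^sub>E {..<k} (\<lambda>_. {1..n}).
      real (steiner_dist {1..n} E (i ` {..<k})) * (\<Prod>j<k. c (i j)))"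

end

theory Submission
  imports Defs
begin

text \<open>In a tree, a minimal connected subgraph containing U uses exactly those edges e whose
  removal separates U; so S(U) counts the edges e of T for which U meets
  both components of T - e. Exchanging the sums, M(c,...,c) becomes a sum over edges e,
  with sides A and V - A, of the sum of c(i1)...c(ik) over the tuples meeting both sides.
  By multilinearity that inner sum is s(V)^k - s(A)^k - s(V - A)^k = 0 - a^k - (-a)^k,
  where s(B) is the sum of c over B and a = s(A); this vanishes for odd k.\<close>

lemma adj_commute: "adj F a b \<longleftrightarrow> adj F b a"
  by (simp add: adj_def insert_commute)

lemma rtranclp_adj_sym: "(adj F)\<^sup>*\<^sup>* a b \<Longrightarrow> (adj F)\<^sup>*\<^sup>* b a"
  by (induction rule: rtranclp_induct)
    (auto intro: converse_rtranclp_into_rtranclp adj_commute[THEN iffD1])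

lemma rtranclp_adj_mono: "F \<subseteq> G \<Longrightarrow> (adj F)\<^sup>*\<^sup>* a b \<Longrightarrow> (adj G)\<^sup>*\<^sup>* a b"
  by (rule rtranclp_mono[THEN predicate2D]) (auto simp: adj_def)

lemma rtranclp_adj_Diff_edge:
  assumes "(adj F)\<^sup>*\<^sup>* v t"
  shows "(adj (F - {{x,y}}))\<^sup>*\<^sup>* v t \<or> (adj (F - {{x,y}}))\<^sup>*\<^sup>* v x \<or> (adj (F - {{x,y}}))\<^sup>*\<^sup>* v y"
  using assms
proof (induction rule: converse_rtranclp_induct)
  case (step a b)
  show ?case
  proof (cases "{a,b} = {x,y}")
    case True
    then have "a = x \<or> a = y" by (metis doubleton_eq_iff)
    then show ?thesis by auto
  next
    case False
    then have "adj (F - {{x,y}}) a b" using step(1) by (auto simp: adj_def)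
    then show ?thesis using step(3) by (meson converse_rtranclp_into_rtranclp)
  qed
qed simp

lemma tree_finite_edges: "is_tree V E \<Longrightarrow> finite E"
proof -
  assume t: "is_tree V E"
  then have "E \<subseteq> Pow V" unfolding is_tree_def is_graph_def by auto
  then show ?thesis using t finite_subset unfolding is_tree_def by blast
qed

lemma tree_edge_endpoints:
  "is_tree V E \<Longrightarrow> {x,y} \<in> E \<Longrightarrow> x \<in> V \<and> y \<in> V"
  unfolding is_tree_def is_graph_def by (metis doubleton_eq_iff)

lemma tree_edge_is_bridge:
  assumes t: "is_tree V E" and e: "{x,y} \<in> E"
  shows "\<not> (adj (E - {{x,y}}))\<^sup>*\<^sup>* x y"
proof
  assume xy: "(adj (E - {{x,y}}))\<^sup>*\<^sup>* x y"
  have edge: "(adj (E - {{x,y}}))\<^sup>*\<^sup>* a b" if "adj E a b" for a b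
  proof (cases "{a,b} = {x,y}")
    case True
    then have "(a = x \<and> b = y) \<or> (a = y \<and> b = x)" by (metis doubleton_eq_iff)
    then show ?thesis using xy rtranclp_adj_sym by auto
  next
    case False
    then have "adj (E - {{x,y}}) a b" using that by (simp add: adj_def)
    then show ?thesis by blast
  qed
  have "(adj (E - {{x,y}}))\<^sup>*\<^sup>* a b" if "(adj E)\<^sup>*\<^sup>* a b" for a b
    using that by (induction rule: rtranclp_induct) (auto intro: rtranclp_trans edge)
  then have "connected_graph V (E - {{x,y}})"
    using t unfolding is_tree_def connected_graph_def by blast
  then show False using t e unfolding is_tree_def by blast
qed

lemma tree_edge_components:
  assumes "is_tree V E" "{x,y} \<in> E" "v \<in> V"
  shows "(adj (E - {{x,y}}))\<^sup>*\<^sup>* x v \<or> (adj (E - {{x,y}}))\<^sup>*\<^sup>* y v"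
proof -
  have "(adj E)\<^sup>*\<^sup>* v x"
    using assms tree_edge_endpoints unfolding is_tree_def connected_graph_def by blast
  then show ?thesis
    using rtranclp_adj_Diff_edge[of E v x x y] rtranclp_adj_sym by blast
qed

definition steiner_subgraph :: "nat set \<Rightarrow> nat set set \<Rightarrow> nat set \<Rightarrow> nat set \<Rightarrow> nat set set \<Rightarrow> bool" where
  "steiner_subgraph V E U W F \<longleftrightarrow>
     W \<subseteq> V \<and> F \<subseteq> E \<and> is_graph W F \<and> connected_graph W F \<and> U \<subseteq> W"

lemma rtranclp_adj_restrict_component:
  assumes "(adj (F - {e}))\<^sup>*\<^sup>* v t" "(adj (E - {e}))\<^sup>*\<^sup>* x v" "F \<subseteq> E"
  shows "(adj {f\<in>F. f \<subseteq> {w. (adj (E - {e}))\<^sup>*\<^sup>* x w}})\<^sup>*\<^sup>* v t \<and> (adj (E - {e}))\<^sup>*\<^sup>* x t"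
  using assms(1)
proof (induction rule: rtranclp_induct)
  case (step t t')
  have "adj (E - {e}) t t'" using step(2) assms(3) by (auto simp: adj_def)
  then have t': "(adj (E - {e}))\<^sup>*\<^sup>* x t'" using step(3) by (meson rtranclp.rtrancl_into_rtrancl)
  have "{t,t'} \<in> F" using step(2) by (simp add: adj_def)
  moreover have "{t,t'} \<subseteq> {w. (adj (E - {e}))\<^sup>*\<^sup>* x w}" using step(3) t' by simp
  ultimately have "adj {f\<in>F. f \<subseteq> {w. (adj (E - {e}))\<^sup>*\<^sup>* x w}} t t'"
    by (simp add: adj_def)
  then show ?case using step(3) t' by (meson rtranclp.rtrancl_into_rtrancl)
qed (use assms in simp)

lemma steiner_subgraph_shrink:
  assumes t: "is_tree V E" and e: "{x,y} \<in> E"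
    and f: "steiner_subgraph V E U W F" and eF: "{x,y} \<in> F"
    and U: "U \<subseteq> {v. (adj (E - {{x,y}}))\<^sup>*\<^sup>* x v}"
  shows "\<exists>W' F'. steiner_subgraph V E U W' F' \<and> card F' < card F"
proof -
  define A where "A = {v. (adj (E - {{x,y}}))\<^sup>*\<^sup>* x v}"
  define W' where "W' = W \<inter> A"
  define F' where "F' = {f\<in>F. f \<subseteq> A}"
  have yA: "y \<notin> A" using tree_edge_is_bridge[OF t e] by (simp add: A_def)
  have FE: "F \<subseteq> E" and gW: "is_graph W F" and cW: "connected_graph W F"
    and UW: "U \<subseteq> W" and WV: "W \<subseteq> V"
    using f by (auto simp: steiner_subgraph_def)
  have "{x,y} \<notin> F'" using yA by (auto simp: F'_def)
  moreover have "F' \<subseteq> F" by (auto simp: F'_def)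
  ultimately have "F' \<subset> F" using eF by blast
  then have card: "card F' < card F"
    using tree_finite_edges[OF t] FE by (meson finite_subset psubset_card_mono)
  have xW: "x \<in> W" using gW eF unfolding is_graph_def by (metis doubleton_eq_iff)
  have g': "is_graph W' F'"
    using gW unfolding is_graph_def F'_def W'_def by fastforce
  have to_x: "(adj F')\<^sup>*\<^sup>* v x" if v: "v \<in> W'" for v
  proof -
    have vA: "(adj (E - {{x,y}}))\<^sup>*\<^sup>* x v" using v by (simp add: W'_def A_def)
    have "\<not> (adj (F - {{x,y}}))\<^sup>*\<^sup>* v y"
    proof
      assume "(adj (F - {{x,y}}))\<^sup>*\<^sup>* v y"
      then have "(adj (E - {{x,y}}))\<^sup>*\<^sup>* v y"
        using FE rtranclp_adj_mono[of "F - {{x,y}}" "E - {{x,y}}"] by blast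
      then show False using vA yA by (simp add: A_def) (meson rtranclp_trans)
    qed
    moreover have "(adj F)\<^sup>*\<^sup>* v x" using cW v xW by (auto simp: connected_graph_def W'_def)
    ultimately have "(adj (F - {{x,y}}))\<^sup>*\<^sup>* v x" using rtranclp_adj_Diff_edge by blast
    from rtranclp_adj_restrict_component[OF this vA FE] show ?thesis
      by (simp add: F'_def A_def)
  qed
  have "connected_graph W' F'"
    unfolding connected_graph_def
  proof (intro conjI ballI)
    show "W' \<noteq> {}" using xW by (auto simp: W'_def A_def)
  next
    fix a b assume "a \<in> W'" "b \<in> W'"
    then show "(adj F')\<^sup>*\<^sup>* a b" using to_x rtranclp_adj_sym rtranclp_trans by metis
  qed
  moreover have "W' \<subseteq> V" "F' \<subseteq> E" "U \<subseteq> W'"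
    using WV FE UW U by (auto simp: W'_def F'_def A_def)
  ultimately have "steiner_subgraph V E U W' F'"
    unfolding steiner_subgraph_def using g' by blast
  then show ?thesis using card by blast
qed

text \<open>The side of an edge e is the component of T - e containing a fixed endpoint of e;
  which endpoint is chosen does not matter for the cut condition below.\<close>

definition edge_side :: "nat set set \<Rightarrow> nat set \<Rightarrow> nat set" where
  "edge_side E e = {v. (adj (E - {e}))\<^sup>*\<^sup>* (SOME x. x \<in> e) v}"

lemma tree_edge_side:
  assumes "is_tree V E" "e \<in> E"
  obtains x y where "e = {x,y}" "edge_side E e = {v. (adj (E - {{x,y}}))\<^sup>*\<^sup>* x v}"
proof -
  obtain p q where e: "e = {p,q}"
    using assms unfolding is_tree_def is_graph_def by blast
  then have "(SOME x. x \<in> e) \<in> e" by (metis insertI1 someI_ex)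
  then obtain y where "e = {SOME x. x \<in> e, y}"
    using e by (metis insert_commute insert_iff singletonD)
  then show ?thesis using that unfolding edge_side_def by metis
qed

lemma steiner_dist_tree:
  assumes t: "is_tree V E" and UV: "U \<subseteq> V"
  shows "steiner_dist V E U = card {e\<in>E. U \<inter> edge_side E e \<noteq> {} \<and> \<not> U \<subseteq> edge_side E e}"
    (is "_ = card ?S")
proof -
  define P where "P = (\<lambda>m. \<exists>W F. steiner_subgraph V E U W F \<and> card F = m)"
  have sd: "steiner_dist V E U = Least P"
    unfolding steiner_dist_def P_def steiner_subgraph_def by simp
  have "P (card E)" using t UV unfolding P_def steiner_subgraph_def is_tree_def by auto
  then have "P (Least P)" by (rule LeastI)
  then obtain W F where f: "steiner_subgraph V E U W F" and cF: "card F = Least P"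
    by (auto simp: P_def)
  have minimal: "card F \<le> card F'" if "steiner_subgraph V E U W' F'" for W' F'
    using that cF by (metis (mono_tags) Least_le P_def)
  have FE: "F \<subseteq> E" and cW: "connected_graph W F" and UW: "U \<subseteq> W"
    using f by (auto simp: steiner_subgraph_def)
  have "e \<in> F" if eS: "e \<in> ?S" for e
  proof (rule ccontr)
    assume "e \<notin> F"
    then have FE': "F \<subseteq> E - {e}" using FE by blast
    obtain u w where u: "u \<in> U" "u \<in> edge_side E e" and w: "w \<in> U" "w \<notin> edge_side E e"
      using eS by blast
    have "(adj F)\<^sup>*\<^sup>* u w" using cW UW u w by (auto simp: connected_graph_def)
    then have "(adj (E - {e}))\<^sup>*\<^sup>* u w" by (rule rtranclp_adj_mono[OF FE'])
    then show False using u w unfolding edge_side_def by (simp add: rtranclp_trans)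
  qed
  moreover have "e \<in> ?S" if eF: "e \<in> F" for e
  proof (rule ccontr)
    assume nS: "e \<notin> ?S"
    have eE: "e \<in> E" using eF FE by blast
    obtain x y where e: "e = {x,y}" and side: "edge_side E e = {v. (adj (E - {{x,y}}))\<^sup>*\<^sup>* x v}"
      using tree_edge_side[OF t eE] .
    have xy: "{x,y} \<in> E" "{x,y} \<in> F" and yx: "{y,x} \<in> E" "{y,x} \<in> F"
      using eE eF e by (simp_all add: insert_commute)
    have "U \<inter> edge_side E e = {} \<or> U \<subseteq> edge_side E e" using nS eE by simp
    then obtain W' F' where "steiner_subgraph V E U W' F'" "card F' < card F"
    proof
      assume "U \<subseteq> edge_side E e"
      then show ?thesis using that steiner_subgraph_shrink[OF t xy(1) f xy(2)] side by blast
    next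
      assume disj: "U \<inter> edge_side E e = {}"
      have "(adj (E - {{x,y}}))\<^sup>*\<^sup>* y u" if "u \<in> U" for u
        using tree_edge_components[OF t xy(1), of u] that UV disj side by blast
      then have "(adj (E - {{y,x}}))\<^sup>*\<^sup>* y u" if "u \<in> U" for u
        using that by (simp add: insert_commute)
      then show ?thesis using that steiner_subgraph_shrink[OF t yx(1) f yx(2)] by blast
    qed
    then show False using minimal by fastforce
  qed
  ultimately have "F = ?S" using FE by blast
  then show ?thesis using sd cF by simp
qed

lemma sum_PiE_prod_eq_power:
  fixes c :: "'a \<Rightarrow> 'b::comm_semiring_1"
  assumes "finite S"
  shows "(\<Sum>i\<in>Pi\<^sub>E {..<k} (\<lambda>_. S). \<Prod>j<k. c (i j)) = (sum c S) ^ k"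
  using prod_sum_PiE[of "{..<k}" "\<lambda>_. S" "\<lambda>_ y. c y"] assms by simp

lemma sum_PiE_image_subset:
  fixes g :: "('a \<Rightarrow> 'b) \<Rightarrow> 'c::comm_monoid_add"
  assumes "finite S" "finite K"
  shows "(\<Sum>i\<in>Pi\<^sub>E K (\<lambda>_. S). if i ` K \<subseteq> A then g i else 0) = (\<Sum>i\<in>Pi\<^sub>E K (\<lambda>_. S \<inter> A). g i)"
proof -
  have "(\<Sum>i\<in>Pi\<^sub>E K (\<lambda>_. S). if i ` K \<subseteq> A then g i else 0) = sum g {i\<in>Pi\<^sub>E K (\<lambda>_. S). i ` K \<subseteq> A}"
    by (rule sum.inter_filter[symmetric]) (use assms in \<open>auto intro: finite_PiE\<close>)
  also have "{i\<in>Pi\<^sub>E K (\<lambda>_. S). i ` K \<subseteq> A} = Pi\<^sub>E K (\<lambda>_. S \<inter> A)"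
    by (auto simp: PiE_iff extensional_def)
  finally show ?thesis .
qed

lemma sum_split_tuples_odd_eq_0:
  fixes c :: "'a \<Rightarrow> 'b::comm_ring_1" and k :: nat
  assumes V: "finite V" and c: "sum c V = 0" and k: "odd k"
  shows "(\<Sum>i\<in>Pi\<^sub>E {..<k} (\<lambda>_. V).
            if i ` {..<k} \<inter> A \<noteq> {} \<and> \<not> i ` {..<k} \<subseteq> A then \<Prod>j<k. c (i j) else 0) = 0"
proof -
  define K where "K = {..<k}"
  define P where "P = Pi\<^sub>E K (\<lambda>_. V)"
  define p where "p = (\<lambda>i. \<Prod>j<k. c (i j))"
  define in_set where "in_set = (\<lambda>B i. if i ` K \<subseteq> B then p i else 0)"
  have "K \<noteq> {}" using odd_pos[OF k] by (auto simp: K_def)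
  then have "(if i ` K \<inter> A \<noteq> {} \<and> \<not> i ` K \<subseteq> A then p i else 0)
      = p i - in_set (V \<inter> A) i - in_set (V - A) i" if "i \<in> P" for i
    using that by (auto simp: P_def PiE_iff in_set_def) blast+
  then have "(\<Sum>i\<in>P. if i ` K \<inter> A \<noteq> {} \<and> \<not> i ` K \<subseteq> A then p i else 0)
      = sum p P - sum (in_set (V \<inter> A)) P - sum (in_set (V - A)) P"
    by (simp add: sum_subtractf)
  also have "\<dots> = (sum c V) ^ k - (sum c (V \<inter> A)) ^ k - (sum c (V - A)) ^ k"
  proof -
    have "sum (in_set B) P = (sum c (V \<inter> B)) ^ k" for B
      using sum_PiE_image_subset[OF V, of K B p] V
      by (simp add: in_set_def P_def p_def K_def sum_PiE_prod_eq_power)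
    moreover have "sum p P = (sum c V) ^ k"
      using V by (simp add: P_def p_def K_def sum_PiE_prod_eq_power)
    ultimately show ?thesis by (simp add: Int_absorb1 Diff_subset)
  qed
  also have "\<dots> = 0"
  proof -
    have "sum c (V - A) = - sum c (V \<inter> A)"
      using sum.Int_Diff[OF V, of c A] c by (simp add: eq_neg_iff_add_eq_0 add.commute)
    then show ?thesis using c k by (simp add: power_minus_odd zero_power odd_pos)
  qed
  finally show ?thesis unfolding K_def P_def p_def .
qed

theorem mainTheorem3:
  fixes n k :: nat and E :: "nat set set" and c :: "nat \<Rightarrow> real"
  assumes "n \<ge> 2" and "is_tree {1..n} E"
    and "k \<ge> 3" and "odd k"
    and "(\<Sum>i=1..n. c i) = 0"
  shows "steiner_form n E k c = 0"
proof -
  define P where "P = Pi\<^sub>E {..<k} (\<lambda>_. {1..n::nat})"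
  define p where "p = (\<lambda>i. \<Prod>j<k. c (i j))"
  define split where "split = (\<lambda>e (i::nat \<Rightarrow> nat).
    i ` {..<k} \<inter> edge_side E e \<noteq> {} \<and> \<not> i ` {..<k} \<subseteq> edge_side E e)"
  have "steiner_dist {1..n} E (i ` {..<k}) * p i = (\<Sum>e\<in>E. if split e i then p i else 0)"
    if "i \<in> P" for i
  proof -
    have "i ` {..<k} \<subseteq> {1..n}" using that by (auto simp: P_def PiE_iff)
    then have "steiner_dist {1..n} E (i ` {..<k}) = card {e\<in>E. split e i}"
      using steiner_dist_tree[OF assms(2)] by (simp add: split_def)
    then show ?thesis
      using sum.inter_filter[OF tree_finite_edges[OF assms(2)], of "\<lambda>_. p i" "\<lambda>e. split e i"]
      by simp
  qed
  then have "steiner_form n E k c = (\<Sum>i\<in>P. \<Sum>e\<in>E. if split e i then p i else 0)"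
    unfolding steiner_form_def P_def[symmetric] p_def by (rule sum.cong[OF refl])
  also have "\<dots> = (\<Sum>e\<in>E. \<Sum>i\<in>P. if split e i then p i else 0)"
    by (rule sum.swap)
  also have "\<dots> = 0"
    unfolding P_def p_def split_def using sum_split_tuples_odd_eq_0[of "{1..n}" c k] assms(4,5)
    by simp
  finally show ?thesis .
qed

end
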